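(* Let $X,Y$ be metrizable vector spaces over $K$ with metrics $d_X,d_Y$. If $d_Y$ is translation invariant and scale bounded on $Y$, then $B_d(X,Y)$ is a vector space under pointwise operations and $d$ is a translation invariant metric on it. Furthermore, if $Y$ is a normed space and $d_Y$ is the metric induced by its norm, then $B_d(X,Y)$ is a normed space with norm $\|F\|_{B_d(X,Y)}=d(F,0)$.
   Context: $K$ is $\mathbb{R}$ or $\mathbb{C}$. For maps $F_1,F_2:X\to Y$, $d(F_1,F_2)=\max\left\{\sup_{x\neq0,x\in X}\frac{d_Y[F_1(x),F_2(x)]}{d_X(x,0)},\ d_Y[F_1(0),F_2(0)]\right\}\in[0,\infty]$, and $B_d(X,Y)$ is the set of maps $F:X\to Y$ with $d(F,0)<\infty$. A translation invariant metric $d_Y$ is scale bounded on $Y$ if for every $\alpha\in K$ there is a positive number $C_\alpha$ with $d_Y(\alpha y,0)\le C_\alpha d_Y(y,0)$ for all $y\in Y$. *)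

theory Defs
  imports "HOL-Analysis.Analysis" "HOL-Library.Function_Algebras"
begin

definition metrizable_vs ::
  "('k::real_normed_field \<Rightarrow> 'a::ab_group_add \<Rightarrow> 'a) \<Rightarrow> ('a \<Rightarrow> 'a \<Rightarrow> real) \<Rightarrow> bool" where
  "metrizable_vs s d \<longleftrightarrow>
     vector_space s \<and> Metric_space UNIV d \<and>
     continuous_map (prod_topology (Metric_space.mtopology UNIV d) (Metric_space.mtopology UNIV d))
                    (Metric_space.mtopology UNIV d) (\<lambda>(x, y). x + y) \<and>
     continuous_map (prod_topology (euclidean :: 'k topology) (Metric_space.mtopology UNIV d))
                    (Metric_space.mtopology UNIV d) (\<lambda>(a, x). s a x)"

definition translation_invariant :: "('a::ab_group_add \<Rightarrow> 'a \<Rightarrow> real) \<Rightarrow> bool" where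
  "translation_invariant d \<longleftrightarrow> (\<forall>u v w. d (u + w) (v + w) = d u v)"

definition scale_bounded ::
  "('k \<Rightarrow> 'a::ab_group_add \<Rightarrow> 'a) \<Rightarrow> ('a \<Rightarrow> 'a \<Rightarrow> real) \<Rightarrow> bool" where
  "scale_bounded s d \<longleftrightarrow> (\<forall>\<alpha>. \<exists>C>0. \<forall>y. d (s \<alpha> y) 0 \<le> C * d y 0)"

definition dmap ::
  "('a::zero \<Rightarrow> 'a \<Rightarrow> real) \<Rightarrow> ('b \<Rightarrow> 'b \<Rightarrow> real) \<Rightarrow> ('a \<Rightarrow> 'b) \<Rightarrow> ('a \<Rightarrow> 'b) \<Rightarrow> ennreal" where
  "dmap dX dY F1 F2 =
     max (SUP x\<in>UNIV - {0}. ennreal (dY (F1 x) (F2 x) / dX x 0)) (ennreal (dY (F1 0) (F2 0)))"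

definition Bd ::
  "('a::zero \<Rightarrow> 'a \<Rightarrow> real) \<Rightarrow> ('b::zero \<Rightarrow> 'b \<Rightarrow> real) \<Rightarrow> ('a \<Rightarrow> 'b) set" where
  "Bd dX dY = {F. dmap dX dY F (\<lambda>_. 0) < \<infinity>}"

definition is_norm :: "('k::real_normed_field \<Rightarrow> 'a::ab_group_add \<Rightarrow> 'a) \<Rightarrow> ('a \<Rightarrow> real) \<Rightarrow> bool" where
  "is_norm s n \<longleftrightarrow> (\<forall>y. n y = 0 \<longleftrightarrow> y = 0) \<and> (\<forall>u v. n (u + v) \<le> n u + n v) \<and>
     (\<forall>a y. n (s a y) = norm a * n y)"

end

theory Submission
  imports Defs
begin

text \<open>The distance d(F, G) is a supremum of the pointwise distances dY (F x) (G x), weighted by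
  the positive factors 1 / dX x 0 (and by 1 at x = 0), so the metric axioms of dY pass to d
  termwise, and translation invariance of dY gives that of d. Then d(F + G, 0) \<le> d(F, 0) + d(G, 0)
  by the triangle inequality through G, and d(\<alpha>F, 0) \<le> C_\<alpha> d(F, 0) by scale boundedness, so
  B_d(X, Y) is a subspace on which d is finite. For a norm, the factor \<parallel>\<alpha>\<parallel> can be pulled out of
  the supremum.\<close>

lemma dmap_le_iff:
  "dmap dX dY F G \<le> B \<longleftrightarrow>
     (\<forall>x\<in>UNIV - {0}. ennreal (dY (F x) (G x) / dX x 0) \<le> B) \<and> ennreal (dY (F 0) (G 0)) \<le> B"
  unfolding dmap_def by (simp add: SUP_le_iff)

lemma dmap_ge_weighted:
  "x \<noteq> 0 \<Longrightarrow> ennreal (dY (F x) (G x) / dX x 0) \<le> dmap dX dY F G"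
  unfolding dmap_def by (rule order.trans[OF SUP_upper max.cobounded1]) auto

lemma dmap_ge_at_zero: "ennreal (dY (F 0) (G 0)) \<le> dmap dX dY F G"
  unfolding dmap_def by simp

lemma (in Metric_space) pos_if_ne:
  "x \<in> M \<Longrightarrow> y \<in> M \<Longrightarrow> x \<noteq> y \<Longrightarrow> d x y > 0"
  using nonneg[of x y] zero[of x y] by force

lemma dmap_commute:
  assumes "Metric_space UNIV dY"
  shows "dmap dX dY F G = dmap dX dY G F"
  using Metric_space.commute[OF assms] unfolding dmap_def by simp

lemma dmap_triangle:
  fixes dX :: "'a::zero \<Rightarrow> 'a \<Rightarrow> real"
  assumes X: "Metric_space UNIV dX" and Y: "Metric_space UNIV dY"
  shows "dmap dX dY F H \<le> dmap dX dY F G + dmap dX dY G H"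
  unfolding dmap_le_iff
proof (intro conjI ballI)
  fix x :: 'a
  assume "x \<in> UNIV - {0}"
  then have x: "x \<noteq> 0" by simp
  have pos: "dX x 0 > 0"
    using Metric_space.pos_if_ne[OF X] x by simp
  have "dY (F x) (H x) / dX x 0 \<le> (dY (F x) (G x) + dY (G x) (H x)) / dX x 0"
    using Metric_space.triangle[OF Y, of "F x" "G x" "H x"] pos by (intro divide_right_mono) auto
  then have "ennreal (dY (F x) (H x) / dX x 0)
      \<le> ennreal (dY (F x) (G x) / dX x 0 + dY (G x) (H x) / dX x 0)"
    by (simp add: add_divide_distrib ennreal_leI)
  also have "\<dots> = ennreal (dY (F x) (G x) / dX x 0) + ennreal (dY (G x) (H x) / dX x 0)"
    using Metric_space.nonneg[OF Y] pos by simp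
  also have "\<dots> \<le> dmap dX dY F G + dmap dX dY G H"
    using dmap_ge_weighted[OF x] by (intro add_mono)
  finally show "ennreal (dY (F x) (H x) / dX x 0) \<le> dmap dX dY F G + dmap dX dY G H" .
next
  have "ennreal (dY (F 0) (H 0)) \<le> ennreal (dY (F 0) (G 0) + dY (G 0) (H 0))"
    using Metric_space.triangle[OF Y] by (simp add: ennreal_leI)
  also have "\<dots> = ennreal (dY (F 0) (G 0)) + ennreal (dY (G 0) (H 0))"
    using Metric_space.nonneg[OF Y] by simp
  also have "\<dots> \<le> dmap dX dY F G + dmap dX dY G H"
    using dmap_ge_at_zero by (intro add_mono)
  finally show "ennreal (dY (F 0) (H 0)) \<le> dmap dX dY F G + dmap dX dY G H" .
qed

lemma dmap_eq_0_iff: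
  fixes dX :: "'a::zero \<Rightarrow> 'a \<Rightarrow> real"
  assumes X: "Metric_space UNIV dX" and Y: "Metric_space UNIV dY"
  shows "dmap dX dY F G = 0 \<longleftrightarrow> F = G"
proof
  assume vanish: "dmap dX dY F G = 0"
  show "F = G"
  proof
    fix x
    show "F x = G x"
    proof (cases "x = 0")
      case True
      have "dY (F 0) (G 0) \<le> 0"
        using dmap_ge_at_zero[of dY F G dX] vanish by (simp add: ennreal_eq_0_iff)
      then show ?thesis
        using True Metric_space.nonneg[OF Y, of "F 0" "G 0"] Metric_space.zero[OF Y] by simp
    next
      case False
      then have "dX x 0 > 0"
        using Metric_space.pos_if_ne[OF X] by simp
      moreover have "dY (F x) (G x) / dX x 0 \<le> 0"
        using dmap_ge_weighted[OF False, of dY F G dX] vanish by (simp add: ennreal_eq_0_iff)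
      ultimately show ?thesis
        using Metric_space.nonneg[OF Y, of "F x" "G x"] Metric_space.zero[OF Y]
        by (simp add: divide_le_0_iff)
    qed
  qed
next
  assume "F = G"
  then have "dmap dX dY F G \<le> 0"
    unfolding dmap_le_iff using Metric_space.mdist_zero[OF Y] by simp
  then show "dmap dX dY F G = 0"
    by simp
qed

lemma dmap_translation_invariant:
  assumes "translation_invariant dY"
  shows "dmap dX dY (F + H) (G + H) = dmap dX dY F G"
  using assms unfolding dmap_def translation_invariant_def by simp

lemma dmap_add_zero_le:
  fixes F G :: "'a::zero \<Rightarrow> 'b::ab_group_add"
  assumes "Metric_space UNIV dX" "Metric_space UNIV dY" "translation_invariant dY"
  shows "dmap dX dY (F + G) 0 \<le> dmap dX dY F 0 + dmap dX dY G 0"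
proof -
  have "dmap dX dY (F + G) (0 + G) = dmap dX dY F 0"
    by (rule dmap_translation_invariant[OF assms(3)])
  then show ?thesis
    using dmap_triangle[OF assms(1,2), of "F + G" 0 "0 + G"] by (simp only: add_0_left)
qed

lemma dmap_scale_le:
  fixes dX :: "'a::zero \<Rightarrow> 'a \<Rightarrow> real"
  assumes X: "Metric_space UNIV dX" and "C > 0" and bound: "\<And>y. dY (s y) 0 \<le> C * dY y 0"
  shows "dmap dX dY (\<lambda>x. s (F x)) (\<lambda>_. 0) \<le> ennreal C * dmap dX dY F (\<lambda>_. 0)"
  unfolding dmap_le_iff
proof (intro conjI ballI)
  fix x :: 'a
  assume "x \<in> UNIV - {0}"
  then have x: "x \<noteq> 0" by simp
  have "dX x 0 > 0"
    using Metric_space.pos_if_ne[OF X] x by simp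
  then have "dY (s (F x)) 0 / dX x 0 \<le> C * (dY (F x) 0 / dX x 0)"
    using bound[of "F x"] by (simp add: divide_right_mono)
  then have "ennreal (dY (s (F x)) 0 / dX x 0) \<le> ennreal C * ennreal (dY (F x) 0 / dX x 0)"
    using \<open>C > 0\<close> by (simp add: ennreal_mult'[symmetric] ennreal_leI)
  also have "\<dots> \<le> ennreal C * dmap dX dY F (\<lambda>_. 0)"
    using dmap_ge_weighted[OF x, of dY F "\<lambda>_. 0" dX] by (intro mult_left_mono) auto
  finally show "ennreal (dY (s (F x)) 0 / dX x 0) \<le> ennreal C * dmap dX dY F (\<lambda>_. 0)" .
next
  have "ennreal (dY (s (F 0)) 0) \<le> ennreal C * ennreal (dY (F 0) 0)"
    using bound \<open>C > 0\<close> by (simp add: ennreal_mult'[symmetric] ennreal_leI)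
  also have "\<dots> \<le> ennreal C * dmap dX dY F (\<lambda>_. 0)"
    using dmap_ge_at_zero[of dY F "\<lambda>_. 0" dX] by (intro mult_left_mono) auto
  finally show "ennreal (dY (s (F 0)) ((\<lambda>_. 0) 0)) \<le> ennreal C * dmap dX dY F (\<lambda>_. 0)"
    by simp
qed

lemma dmap_scale_norm:
  assumes "is_norm sY nY"
  shows "dmap dX (\<lambda>u v. nY (u - v)) (\<lambda>x. sY a (F x)) 0
       = ennreal (norm a) * dmap dX (\<lambda>u v. nY (u - v)) F 0"
proof -
  have homogeneous: "nY (sY a y) = norm a * nY y" for y
    using assms unfolding is_norm_def by blast
  have scaled: "ennreal (nY (sY a y) / r) = ennreal (norm a) * ennreal (nY y / r)" for y r
    by (metis homogeneous norm_ge_zero ennreal_mult' times_divide_eq_right)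
  have "max (ennreal (norm a) * A) (ennreal (norm a) * B) = ennreal (norm a) * max A B" for A B
    by (rule max_of_mono) (simp add: mono_def mult_left_mono)
  then show ?thesis
    unfolding dmap_def
    by (simp add: scaled[of _ 1, simplified] scaled SUP_mult_left_ennreal[symmetric])
qed

lemma enn2real_dmap_scale_norm:
  assumes "is_norm sY nY" and "dY = (\<lambda>u v. nY (u - v))"
  shows "enn2real (dmap dX dY (\<lambda>x. sY a (F x)) 0) = norm a * enn2real (dmap dX dY F 0)"
  unfolding assms(2) dmap_scale_norm[OF assms(1)] by (simp add: enn2real_mult)

lemma mem_Bd_iff: "F \<in> Bd dX dY \<longleftrightarrow> dmap dX dY F 0 < \<infinity>"
  by (simp add: Bd_def zero_fun_def)

lemma zero_mem_Bd:
  assumes "Metric_space UNIV dY"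
  shows "0 \<in> Bd dX dY"
proof -
  have "dmap dX dY 0 0 \<le> 0"
    unfolding dmap_le_iff using Metric_space.mdist_zero[OF assms] by simp
  then show ?thesis
    by (simp add: mem_Bd_iff)
qed

lemma dmap_less_top_on_Bd:
  fixes dX :: "'a::zero \<Rightarrow> 'a \<Rightarrow> real" and F G :: "'a \<Rightarrow> 'b::zero"
  assumes X: "Metric_space UNIV dX" and Y: "Metric_space UNIV dY"
    and "F \<in> Bd dX dY" "G \<in> Bd dX dY"
  shows "dmap dX dY F G < \<infinity>"
proof -
  have "dmap dX dY F G \<le> dmap dX dY F 0 + dmap dX dY G 0"
    using dmap_triangle[OF X Y, of F G 0] dmap_commute[OF Y, of dX 0 G] by simp
  also have "\<dots> < \<infinity>"
    using assms(3,4) by (simp add: mem_Bd_iff)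
  finally show ?thesis .
qed

lemma add_mem_Bd:
  assumes "Metric_space UNIV dX" "Metric_space UNIV dY" "translation_invariant dY"
    and "F \<in> Bd dX dY" "G \<in> Bd dX dY"
  shows "F + G \<in> Bd dX dY"
  using dmap_add_zero_le[OF assms(1-3), of F G] assms(4,5)
  by (auto simp: mem_Bd_iff intro: order.strict_trans1)

lemma scale_mem_Bd:
  assumes "Metric_space UNIV dX" "scale_bounded s dY" and "F \<in> Bd dX dY"
  shows "(\<lambda>x. s a (F x)) \<in> Bd dX dY"
proof -
  obtain C where "C > 0" "\<And>y. dY (s a y) 0 \<le> C * dY y 0"
    using assms(2) unfolding scale_bounded_def by blast
  from dmap_scale_le[where s = "s a" and dY = dY, OF assms(1) this]
  have "dmap dX dY (\<lambda>x. s a (F x)) (\<lambda>_. 0) \<le> ennreal C * dmap dX dY F (\<lambda>_. 0)" .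
  moreover have "ennreal C * dmap dX dY F (\<lambda>_. 0) < \<infinity>"
    using assms(3) by (simp add: mem_Bd_iff zero_fun_def ennreal_mult_less_top)
  ultimately show ?thesis
    by (simp add: mem_Bd_iff zero_fun_def order.strict_trans1)
qed

lemma module_pointwise:
  assumes "module s"
  shows "module (\<lambda>a (F :: 'a \<Rightarrow> 'b::ab_group_add) x. s a (F x))"
  by unfold_locales
    (simp_all add: fun_eq_iff module.scale_right_distrib[OF assms]
      module.scale_left_distrib[OF assms] module.scale_scale[OF assms] module.scale_one[OF assms])

lemma subspace_Bd:
  assumes "module s" "Metric_space UNIV dX" "Metric_space UNIV dY"
    and "translation_invariant dY" "scale_bounded s dY"
  shows "module.subspace (\<lambda>a F x. s a (F x)) (Bd dX dY)"
  unfolding module.subspace_def[OF module_pointwise[OF assms(1)]]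
  using zero_mem_Bd[OF assms(3)] add_mem_Bd[OF assms(2-4)] scale_mem_Bd[OF assms(2,5)]
  by blast

lemma Metric_space_Bd:
  assumes X: "Metric_space UNIV dX" and Y: "Metric_space UNIV dY"
  shows "Metric_space (Bd dX dY) (\<lambda>F G. enn2real (dmap dX dY F G))"
proof
  fix F G
  show "0 \<le> enn2real (dmap dX dY F G)" by simp
  show "enn2real (dmap dX dY F G) = enn2real (dmap dX dY G F)"
    by (simp add: dmap_commute[OF Y])
next
  fix F G
  assume "F \<in> Bd dX dY" "G \<in> Bd dX dY"
  then have "dmap dX dY F G < \<infinity>"
    by (rule dmap_less_top_on_Bd[OF X Y])
  then show "enn2real (dmap dX dY F G) = 0 \<longleftrightarrow> F = G"
    using dmap_eq_0_iff[OF X Y, of F G] by (auto simp: enn2real_eq_0_iff)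
next
  fix F G H
  assume "F \<in> Bd dX dY" "G \<in> Bd dX dY" "H \<in> Bd dX dY"
  then have "dmap dX dY F G < \<infinity>" "dmap dX dY G H < \<infinity>"
    using dmap_less_top_on_Bd[OF X Y] by auto
  then show "enn2real (dmap dX dY F H) \<le> enn2real (dmap dX dY F G) + enn2real (dmap dX dY G H)"
    using dmap_triangle[OF X Y, of F H G]
    by (simp add: enn2real_plus[symmetric] enn2real_mono)
qed

lemma enn2real_dmap_add_zero_le:
  assumes "Metric_space UNIV dX" "Metric_space UNIV dY" "translation_invariant dY"
    and "F \<in> Bd dX dY" "G \<in> Bd dX dY"
  shows "enn2real (dmap dX dY (F + G) 0) \<le> enn2real (dmap dX dY F 0) + enn2real (dmap dX dY G 0)"
  using dmap_add_zero_le[OF assms(1-3), of F G] assms(4,5)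
  by (simp add: mem_Bd_iff enn2real_plus[symmetric] enn2real_mono)

lemma norm_on_Bd:
  assumes X: "Metric_space UNIV dX" and Y: "Metric_space UNIV dY"
    and "is_norm sY nY" and "dY = (\<lambda>u v. nY (u - v))"
  shows "(\<forall>F\<in>Bd dX dY. enn2real (dmap dX dY F 0) = 0 \<longleftrightarrow> F = 0)
    \<and> (\<forall>F\<in>Bd dX dY. \<forall>G\<in>Bd dX dY.
         enn2real (dmap dX dY (F + G) 0) \<le> enn2real (dmap dX dY F 0) + enn2real (dmap dX dY G 0))
    \<and> (\<forall>F\<in>Bd dX dY. \<forall>a.
         enn2real (dmap dX dY (\<lambda>x. sY a (F x)) 0) = norm a * enn2real (dmap dX dY F 0))"
proof -
  have "translation_invariant dY"
    using assms(4) unfolding translation_invariant_def by simp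
  then show ?thesis
    using Metric_space.zero[OF Metric_space_Bd[OF X Y] _ zero_mem_Bd[OF Y]]
      enn2real_dmap_add_zero_le[OF X Y] enn2real_dmap_scale_norm[OF assms(3,4)]
    by blast
qed

theorem theorem10:
  fixes sX :: "'k::real_normed_field \<Rightarrow> 'a::ab_group_add \<Rightarrow> 'a"
    and sY :: "'k \<Rightarrow> 'b::ab_group_add \<Rightarrow> 'b"
    and dX :: "'a \<Rightarrow> 'a \<Rightarrow> real" and dY :: "'b \<Rightarrow> 'b \<Rightarrow> real"
  assumes "metrizable_vs sX dX" and "metrizable_vs sY dY"
    and "translation_invariant dY" and "scale_bounded sY dY"
  shows "module.subspace (\<lambda>a F x. sY a (F x)) (Bd dX dY)
    \<and> (\<forall>F\<in>Bd dX dY. \<forall>G\<in>Bd dX dY. dmap dX dY F G < \<infinity>)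
    \<and> Metric_space (Bd dX dY) (\<lambda>F G. enn2real (dmap dX dY F G))
    \<and> (\<forall>F\<in>Bd dX dY. \<forall>G\<in>Bd dX dY. \<forall>H\<in>Bd dX dY.
         dmap dX dY (F + H) (G + H) = dmap dX dY F G)
    \<and> (\<forall>nY. is_norm sY nY \<and> dY = (\<lambda>u v. nY (u - v)) \<longrightarrow>
         (\<forall>F\<in>Bd dX dY. enn2real (dmap dX dY F 0) = 0 \<longleftrightarrow> F = 0)
       \<and> (\<forall>F\<in>Bd dX dY. \<forall>G\<in>Bd dX dY.
            enn2real (dmap dX dY (F + G) 0) \<le> enn2real (dmap dX dY F 0) + enn2real (dmap dX dY G 0))
       \<and> (\<forall>F\<in>Bd dX dY. \<forall>a.
            enn2real (dmap dX dY (\<lambda>x. sY a (F x)) 0) = norm a * enn2real (dmap dX dY F 0)))"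
proof -
  have X: "Metric_space UNIV dX" and Y: "Metric_space UNIV dY"
    using assms(1,2) unfolding metrizable_vs_def by blast+
  have "module sY"
    using assms(2) unfolding metrizable_vs_def vector_space_def module_def by blast
  show ?thesis
    using subspace_Bd[OF \<open>module sY\<close> X Y assms(3,4)] dmap_less_top_on_Bd[OF X Y]
      Metric_space_Bd[OF X Y] dmap_translation_invariant[OF assms(3)] norm_on_Bd[OF X Y]
    by blast
qed

end
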